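(* Let $S$ be an $a$-cap free configuration. Then a slope labeling of $S$ exists. In particular, for every edge $e$ of $S$ let $c(e)$ be the maximum size of a cap starting with the edge $e$; then the function $e \mapsto c(e)-1$ is a slope labeling of $S$.
   Context: A configuration is a finite set $S$ of points with a linear order $<$ and, for every $3$-element subset, an arbitrary assignment declaring it either a cap or a cup. Points $x_1<\cdots<x_a$ form an $a$-cup (resp. $a$-cap) if every consecutive triple $\{x_{i-1},x_i,x_{i+1}\}$, $1<i<a$, is assigned cup (resp. cap); $1$- and $2$-element sets are both caps and cups. $S$ is $a$-cap free if it contains no $a$-cap. An edge is a pair $x<y$ of points, written $xy$; a cap $x_1x_2\cdots x_a$ with $a \ge 2$ starts with the edge $x_1x_2$. A slope labeling of an $a$-cap free configuration $S$ is an assignment of an integer $s(xy) \in \{1, 2, \dots, a-2\}$ to every edge $xy$ of $S$ such that for any points $x<y<z$ in $S$, $s(xy) \leq s(yz)$ implies that $\{x,y,z\}$ is a $3$-cup. *)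

theory Defs
  imports Main
begin

text \<open>A configuration: a finite set S of a linearly ordered type, together with a
predicate cup on sets; a 3-element subset T is a cup if cup T holds and a cap otherwise.
(The values of cup on sets that are not 3-element subsets of S are irrelevant.)\<close>

definition is_cup :: "'a::linorder set \<Rightarrow> ('a set \<Rightarrow> bool) \<Rightarrow> 'a list \<Rightarrow> bool" where
  "is_cup S cup xs \<longleftrightarrow> sorted_wrt (<) xs \<and> set xs \<subseteq> S \<and>
     (\<forall>i. i + 2 < length xs \<longrightarrow> cup {xs ! i, xs ! (i+1), xs ! (i+2)})"

definition is_cap :: "'a::linorder set \<Rightarrow> ('a set \<Rightarrow> bool) \<Rightarrow> 'a list \<Rightarrow> bool" where
  "is_cap S cup xs \<longleftrightarrow> sorted_wrt (<) xs \<and> set xs \<subseteq> S \<and>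
     (\<forall>i. i + 2 < length xs \<longrightarrow> \<not> cup {xs ! i, xs ! (i+1), xs ! (i+2)})"

definition cap_free :: "nat \<Rightarrow> 'a::linorder set \<Rightarrow> ('a set \<Rightarrow> bool) \<Rightarrow> bool" where
  "cap_free a S cup \<longleftrightarrow> \<not> (\<exists>xs. is_cap S cup xs \<and> length xs = a)"

definition slope_labeling ::
  "nat \<Rightarrow> 'a::linorder set \<Rightarrow> ('a set \<Rightarrow> bool) \<Rightarrow> ('a \<Rightarrow> 'a \<Rightarrow> nat) \<Rightarrow> bool" where
  "slope_labeling a S cup s \<longleftrightarrow>
     (\<forall>x\<in>S. \<forall>y\<in>S. x < y \<longrightarrow> s x y \<in> {1..a-2}) \<and>
     (\<forall>x\<in>S. \<forall>y\<in>S. \<forall>z\<in>S. x < y \<and> y < z \<and> s x y \<le> s y z \<longrightarrow> cup {x, y, z})"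

definition max_cap_from :: "'a::linorder set \<Rightarrow> ('a set \<Rightarrow> bool) \<Rightarrow> 'a \<Rightarrow> 'a \<Rightarrow> nat" where
  "max_cap_from S cup x y =
     Max {length xs | xs. is_cap S cup xs \<and> 2 \<le> length xs \<and> xs ! 0 = x \<and> xs ! 1 = y}"

end

theory Submission
  imports Defs
begin

(* If xyz is a cap, prepending x to a longest cap starting with yz yields a cap starting
   with xy, so c(xy) > c(yz); contrapositively c(xy) <= c(yz) forces xyz to be a cup.
   The range condition holds because every edge is a 2-cap and a-cap freeness bounds
   the length of every cap by a - 1. *)

lemma is_cap_take: "is_cap S cup xs \<Longrightarrow> is_cap S cup (take n xs)"
  unfolding is_cap_def by (auto simp: sorted_wrt_take dest: in_set_takeD)

lemma length_less_if_cap_free: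
  assumes "cap_free a S cup" and "is_cap S cup xs"
  shows "length xs < a"
proof (rule ccontr)
  assume "\<not> length xs < a"
  then have "length (take a xs) = a" by simp
  with is_cap_take[OF assms(2)] assms(1) show False unfolding cap_free_def by blast
qed

lemma is_cap_Cons:
  assumes cap: "is_cap S cup (y # z # zs)" and "x \<in> S" "x < y" "\<not> cup {x, y, z}"
  shows "is_cap S cup (x # y # z # zs)"
proof -
  have "sorted_wrt (<) (x # y # z # zs)"
    using cap \<open>x < y\<close> unfolding is_cap_def by (auto intro: less_trans)
  moreover have "\<not> cup {(x # y # z # zs) ! i, (x # y # z # zs) ! (i+1), (x # y # z # zs) ! (i+2)}"
    if "i + 2 < length (x # y # z # zs)" for i
    using assms that unfolding is_cap_def by (cases i) auto
  ultimately show ?thesis using assms unfolding is_cap_def by auto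
qed

lemma is_cap_edge: "x \<in> S \<Longrightarrow> y \<in> S \<Longrightarrow> x < y \<Longrightarrow> is_cap S cup [x, y]"
  unfolding is_cap_def by auto

context
  fixes a :: nat and S :: "'a::linorder set" and cup :: "'a set \<Rightarrow> bool" and x y :: 'a
  assumes cap_free: "cap_free a S cup" and edge: "x \<in> S" "y \<in> S" "x < y"
begin

abbreviation "cap_lengths \<equiv>
  {length xs | xs. is_cap S cup xs \<and> 2 \<le> length xs \<and> xs ! 0 = x \<and> xs ! 1 = y}"

private lemma finite_cap_lengths: "finite cap_lengths"
  by (rule finite_subset[of _ "{..<a}"]) (auto dest: length_less_if_cap_free[OF cap_free])

private lemma two_in_cap_lengths: "2 \<in> cap_lengths"
  using is_cap_edge[OF edge, of cup] by force

lemma length_le_max_cap_from: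
  "is_cap S cup xs \<Longrightarrow> 2 \<le> length xs \<Longrightarrow> xs ! 0 = x \<Longrightarrow> xs ! 1 = y \<Longrightarrow>
    length xs \<le> max_cap_from S cup x y"
  unfolding max_cap_from_def by (rule Max_ge[OF finite_cap_lengths]) blast

lemma two_le_max_cap_from: "2 \<le> max_cap_from S cup x y"
  unfolding max_cap_from_def by (rule Max_ge[OF finite_cap_lengths two_in_cap_lengths])

lemma max_cap_from_attained:
  obtains zs where "is_cap S cup (x # y # zs)" "length (x # y # zs) = max_cap_from S cup x y"
proof -
  have "max_cap_from S cup x y \<in> cap_lengths"
    unfolding max_cap_from_def using Max_in finite_cap_lengths two_in_cap_lengths by blast
  then obtain xs where xs: "is_cap S cup xs" "2 \<le> length xs" "xs ! 0 = x" "xs ! 1 = y"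
      and len: "length xs = max_cap_from S cup x y"
    by auto
  from xs(2-4) obtain zs where "xs = x # y # zs"
    by (cases xs; cases "tl xs") auto
  with xs(1) len show ?thesis using that by blast
qed

lemma max_cap_from_less: "max_cap_from S cup x y < a"
  using max_cap_from_attained length_less_if_cap_free[OF cap_free] by metis

end

lemma max_cap_from_strict_decrease:
  assumes "cap_free a S cup" "x \<in> S" "y \<in> S" "z \<in> S" "x < y" "y < z" "\<not> cup {x, y, z}"
  shows "max_cap_from S cup y z < max_cap_from S cup x y"
proof -
  obtain zs where yz_cap: "is_cap S cup (y # z # zs)"
      and yz_len: "length (y # z # zs) = max_cap_from S cup y z"
    using max_cap_from_attained[OF assms(1,3,4,6)] .
  have "is_cap S cup (x # y # z # zs)"
    using is_cap_Cons[OF yz_cap assms(2,5,7)] .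
  then have "length (x # y # z # zs) \<le> max_cap_from S cup x y"
    by (rule length_le_max_cap_from[OF assms(1,2,3,5)]) simp_all
  with yz_len show ?thesis by simp
qed

theorem theorem3p2:
  fixes S :: "'a::linorder set" and cup :: "'a set \<Rightarrow> bool" and a :: nat
  assumes "finite S" and "cap_free a S cup"
  shows "(\<exists>s. slope_labeling a S cup s) \<and>
         slope_labeling a S cup (\<lambda>x y. max_cap_from S cup x y - 1)"
proof -
  have "slope_labeling a S cup (\<lambda>x y. max_cap_from S cup x y - 1)"
    unfolding slope_labeling_def
  proof (intro conjI ballI impI)
    fix x y assume "x \<in> S" "y \<in> S" "x < y"
    then show "max_cap_from S cup x y - 1 \<in> {1..a - 2}"
      using two_le_max_cap_from max_cap_from_less assms(2) by fastforce
  next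
    fix x y z assume xyz: "x \<in> S" "y \<in> S" "z \<in> S"
      and order: "x < y \<and> y < z \<and> max_cap_from S cup x y - 1 \<le> max_cap_from S cup y z - 1"
    show "cup {x, y, z}"
    proof (rule ccontr)
      assume "\<not> cup {x, y, z}"
      with assms(2) xyz order have "max_cap_from S cup y z < max_cap_from S cup x y"
        using max_cap_from_strict_decrease by blast
      moreover have "2 \<le> max_cap_from S cup y z"
        using two_le_max_cap_from[OF assms(2)] xyz order by blast
      ultimately show False using order by linarith
    qed
  qed
  then show ?thesis by blast
qed

end
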